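(* Let $0<|q|<1$ and let $x,y,u,v,t$ be complex numbers with $|t|<1$, $|xt|<1$, $|ut|<1$, $|uxt|<1$. Then $$\sum_{n=0}^\infty h_n(x,y|q)\,h_n(u,v|q)\,\frac{t^n}{(q;q)_n}=\frac{(yt,vxt;q)_\infty}{(t,xt,uxt;q)_\infty}\ {}_3\phi_2\left(\begin{array}{c} y,\ xt,\ v/u\\ yt,\ vxt\end{array}; q,\ ut\right).$$
   Context: Throughout $|q|<1$. The $q$-shifted factorials are $(a;q)_0=1$, $(a;q)_n=\prod_{k=0}^{n-1}(1-aq^k)$, $(a;q)_\infty=\prod_{k=0}^\infty(1-aq^k)$, and $(a_1,\dots,a_m;q)_n=(a_1;q)_n\cdots(a_m;q)_n$ (similarly for $n=\infty$). The Gaussian coefficient is ${n\brack k}=\frac{(q;q)_n}{(q;q)_k(q;q)_{n-k}}$. The basic hypergeometric series is ${}_{r+1}\phi_r\left(\begin{array}{c}a_1,\dots,a_{r+1}\\ b_1,\dots,b_r\end{array};q,z\right)=\sum_{n\ge0}\frac{(a_1,\dots,a_{r+1};q)_n}{(q,b_1,\dots,b_r;q)_n}z^n$. The Cauchy polynomials are $P_n(x,y)=(x-y)(x-qy)\cdots(x-q^{n-1}y)$ (with $P_0=1$), and the bivariate Rogers–Szegő polynomials are $h_n(x,y|q)=\sum_{k=0}^n {n\brack k}P_k(x,y)$. *)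

theory Defs
  imports "HOL-Analysis.Analysis"
begin

definition qpoch :: "complex \<Rightarrow> complex \<Rightarrow> nat \<Rightarrow> complex" where
  "qpoch a q n = (\<Prod>k<n. 1 - a * q ^ k)"

definition qpoch_inf :: "complex \<Rightarrow> complex \<Rightarrow> complex" where
  "qpoch_inf a q = (\<Prod>k. 1 - a * q ^ k)"

definition qbinom :: "complex \<Rightarrow> nat \<Rightarrow> nat \<Rightarrow> complex" where
  "qbinom q n k = qpoch q q n / (qpoch q q k * qpoch q q (n - k))"

text \<open>basic hypergeometric series (r+1)phi(r): upper parameters as, lower parameters bs\<close>
definition bhs :: "complex list \<Rightarrow> complex list \<Rightarrow> complex \<Rightarrow> complex \<Rightarrow> complex" where
  "bhs as bs q z = (\<Sum>n. (\<Prod>a\<leftarrow>as. qpoch a q n) /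
        (qpoch q q n * (\<Prod>b\<leftarrow>bs. qpoch b q n)) * z ^ n)"

definition cauchyP :: "complex \<Rightarrow> nat \<Rightarrow> complex \<Rightarrow> complex \<Rightarrow> complex" where
  "cauchyP q n x y = (\<Prod>k<n. x - q ^ k * y)"

definition rsh :: "complex \<Rightarrow> nat \<Rightarrow> complex \<Rightarrow> complex \<Rightarrow> complex" where
  "rsh q n x y = (\<Sum>k\<le>n. qbinom q n k * cauchyP q k x y)"

end

theory Submission
  imports Defs
begin

text \<open>
  Expanding h_n(u,v) = sum_k [n,k] P_k(u,v) and exchanging the summations turns the left-hand
  side into sum_k P_k(u,v) t^k/(q;q)_k R_k, where R_k = sum_m h_{m+k}(x,y) t^m/(q;q)_m.
  Iterating the recurrence h_{m+1}(x,y) = x h_m(x,y) + (1-y) h_m(qx,qy) writes h_{m+k}(x,y) as a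
  combination of the h_m(q^n x, q^n y), whose generating function (yt;q)_inf/((t;q)_inf (xt;q)_inf)
  is the Cauchy product of the q-binomial theorem and Euler's identity; this makes R_k explicit.
  Exchanging the summations once more and summing the inner series by the q-binomial theorem,
  using P_{n+j}(u,v) = P_n(u,v) P_j(u, q^n v), leaves the 3phi2 series. Both exchanges are
  justified by absolute convergence: every factor grows at most geometrically, with ratios
  controlled by |t|, |xt|, |ut| and |uxt|.
\<close>

lemma summable_linear_times_geometric:
  fixes r :: real
  assumes "0 \<le> r" "r < 1"
  shows "summable (\<lambda>n. (real n + 1) * r ^ n)"
proof -
  have geo: "summable (\<lambda>n. norm (r ^ n))" using assms by (simp add: summable_geometric)
  have "(\<lambda>n. \<Sum>i\<le>n. r ^ i * r ^ (n - i)) sums ((\<Sum>n. r ^ n) * (\<Sum>n. r ^ n))"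
    by (rule Cauchy_product_sums[OF geo geo])
  moreover have "(\<Sum>i\<le>n. r ^ i * r ^ (n - i)) = (real n + 1) * r ^ n" for n
    by (simp add: power_add[symmetric])
  ultimately show ?thesis by (simp add: sums_iff)
qed

lemma has_sum_antidiagonals:
  fixes a :: "nat \<Rightarrow> nat \<Rightarrow> 'a :: {topological_comm_monoid_add, t3_space}"
  assumes "((\<lambda>(i, j). a i j) has_sum S) (UNIV \<times> UNIV)"
  shows "((\<lambda>n. \<Sum>i\<le>n. a i (n - i)) has_sum S) UNIV"
proof -
  have "((\<lambda>(n, i). a i (n - i)) has_sum S) (SIGMA n:UNIV. {..n})
      \<longleftrightarrow> ((\<lambda>(i, j). a i j) has_sum S) (UNIV \<times> UNIV)"
    by (rule has_sum_reindex_bij_witness[where j = "\<lambda>(n, i). (i, n - i)"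
          and i = "\<lambda>(i, j). (i + j, i)"]) auto
  with assms have "((\<lambda>(n, i). a i (n - i)) has_sum S) (SIGMA n:UNIV. {..n})"
    by simp
  then show ?thesis
    by (rule has_sum_SigmaD) auto
qed

lemma dominated_double_series_rows_antidiagonals:
  fixes a :: "nat \<Rightarrow> nat \<Rightarrow> 'a :: banach" and \<alpha> \<beta> :: "nat \<Rightarrow> real"
  assumes bound: "\<And>i j. norm (a i j) \<le> \<alpha> i * \<beta> j"
    and "summable \<alpha>" "summable \<beta>" "\<And>i. \<alpha> i \<ge> 0" "\<And>j. \<beta> j \<ge> 0"
    and rows: "\<And>i. (\<lambda>j. a i j) sums A i"
  shows "summable A" and "(\<lambda>n. \<Sum>i\<le>n. a i (n - i)) sums (\<Sum>i. A i)"
proof -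
  have "((\<lambda>j. \<alpha> i * \<beta> j) has_sum (\<alpha> i * (\<Sum>j. \<beta> j))) UNIV" for i
    by (rule sums_nonneg_imp_has_sum) (use assms(3-5) in \<open>auto intro!: sums_mult summable_sums\<close>)
  moreover have "(\<lambda>i. \<alpha> i * (\<Sum>j. \<beta> j)) summable_on UNIV"
    using assms(2-5) suminf_nonneg[OF assms(3,5)]
    by (intro norm_summable_imp_summable_on) (auto simp: abs_mult intro!: summable_mult2)
  ultimately have dom: "(\<lambda>(i, j). \<alpha> i * \<beta> j) summable_on UNIV \<times> UNIV"
    by (intro summable_on_SigmaI) (auto simp: assms(4,5))
  have "Infinite_Sum.abs_summable_on (\<lambda>(i, j). a i j) (UNIV \<times> UNIV)"
  proof (rule Infinite_Sum.abs_summable_on_comparison_test)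
    show "Infinite_Sum.abs_summable_on (\<lambda>(i, j). \<alpha> i * \<beta> j) (UNIV \<times> UNIV)"
      using dom assms(4,5) by (auto simp: case_prod_unfold)
    show "norm ((\<lambda>(i, j). a i j) x) \<le> norm ((\<lambda>(i, j). \<alpha> i * \<beta> j) x)" for x
      using bound[of "fst x" "snd x"] assms(4,5) by (auto simp: case_prod_unfold)
  qed
  then obtain S where S: "((\<lambda>(i, j). a i j) has_sum S) (UNIV \<times> UNIV)"
    using abs_summable_summable summable_on_def by blast
  have "((\<lambda>j. a i j) has_sum A i) UNIV" for i
  proof (rule norm_summable_imp_has_sum[OF _ rows])
    show "summable (\<lambda>j. norm (a i j))"
      by (rule summable_comparison_test[of _ "\<lambda>j. \<alpha> i * \<beta> j"])
         (use bound assms(3) in \<open>auto intro!: summable_mult\<close>)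
  qed
  then have "(A has_sum S) UNIV"
    by (intro has_sum_SigmaD[OF S]) auto
  then have "A sums S"
    by (rule has_sum_imp_sums)
  from S have "((\<lambda>n. \<Sum>i\<le>n. a i (n - i)) has_sum S) UNIV"
    by (rule has_sum_antidiagonals)
  with \<open>A sums S\<close> show "summable A" and "(\<lambda>n. \<Sum>i\<le>n. a i (n - i)) sums (\<Sum>i. A i)"
    by (auto simp: sums_iff dest: has_sum_imp_sums)
qed

lemma mult_max_1_less_1:
  fixes a b c :: real
  assumes "0 \<le> a" "0 \<le> b" "0 \<le> c" "c < 1" "a * c < 1" "b * c < 1" "a * b * c < 1"
  shows "max 1 a * max 1 b * c < 1"
  using assms by (auto simp: max_def)

lemma qpoch_0 [simp]: "qpoch a q 0 = 1"
  by (simp add: qpoch_def)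

lemma qpoch_Suc: "qpoch a q (Suc n) = qpoch a q n * (1 - a * q ^ n)"
  by (simp add: qpoch_def)

lemma qpoch_factor_nonzero_if_qpoch_nonzero: "(\<And>n. qpoch a q n \<noteq> 0) \<Longrightarrow> 1 - a * q ^ k \<noteq> 0"
  using qpoch_Suc[of a q k] by (metis mult_zero_right)

lemma qpoch_inf_0 [simp]: "qpoch_inf 0 q = 1"
  by (simp add: qpoch_inf_def)

lemma cauchyP_0 [simp]: "cauchyP q 0 x y = 1"
  by (simp add: cauchyP_def)

lemma cauchyP_Suc: "cauchyP q (Suc l) x y = cauchyP q l x y * (x - q ^ l * y)"
  by (simp add: cauchyP_def)

lemma cauchyP_1_0 [simp]: "cauchyP q l 1 0 = 1"
  by (simp add: cauchyP_def)

lemma cauchyP_scale: "cauchyP q l (c * x) (c * y) = c ^ l * cauchyP q l x y"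
proof -
  have "cauchyP q l (c * x) (c * y) = (\<Prod>k<l. c * (x - q ^ k * y))"
    unfolding cauchyP_def by (simp add: algebra_simps)
  then show ?thesis by (simp add: prod.distrib cauchyP_def)
qed

lemma cauchyP_add: "cauchyP q (n + j) x y = cauchyP q n x y * cauchyP q j x (q ^ n * y)"
  by (induction j) (simp_all add: cauchyP_Suc power_add mult_ac)

lemma cauchyP_eq_qpoch: "x \<noteq> 0 \<Longrightarrow> cauchyP q n x y = x ^ n * qpoch (y / x) q n"
  by (induction n) (simp_all add: cauchyP_Suc qpoch_Suc field_simps)

lemma qpoch_q_Suc: "qpoch q q (Suc n) = qpoch q q n * (1 - q ^ Suc n)"
  by (simp add: qpoch_Suc)

text \<open>Unlike qbinom, whose value for l > m is
  junk because of truncated subtraction, it vanishes there, so that sums over l \<le> m may be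
  extended to any larger range.\<close>

fun gauss_coeff :: "complex \<Rightarrow> nat \<Rightarrow> nat \<Rightarrow> complex" where
  "gauss_coeff q m 0 = 1"
| "gauss_coeff q 0 (Suc l) = 0"
| "gauss_coeff q (Suc m) (Suc l) = gauss_coeff q m l + q ^ Suc l * gauss_coeff q m (Suc l)"

lemma gauss_coeff_eq_0: "m < l \<Longrightarrow> gauss_coeff q m l = 0"
  by (induction q m l rule: gauss_coeff.induct) auto

definition q_binomial_series :: "complex \<Rightarrow> complex \<Rightarrow> complex \<Rightarrow> complex \<Rightarrow> complex" where
  "q_binomial_series q x y w = (\<Sum>l. cauchyP q l x y / qpoch q q l * w ^ l)"

text \<open>Closed forms of sum_m h_m(x,y) t^m/(q;q)_m and of R_k = sum_m h_{m+k}(x,y) t^m/(q;q)_m.\<close>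

definition rsh_gf :: "complex \<Rightarrow> complex \<Rightarrow> complex \<Rightarrow> complex \<Rightarrow> complex" where
  "rsh_gf q x y t = qpoch_inf (y * t) q / (qpoch_inf t q * qpoch_inf (x * t) q)"

definition rsh_shifted_gf :: "complex \<Rightarrow> complex \<Rightarrow> complex \<Rightarrow> complex \<Rightarrow> nat \<Rightarrow> complex" where
  "rsh_shifted_gf q x y t k =
     (\<Sum>n\<le>k. gauss_coeff q k n * qpoch y q n * x ^ (k - n) * rsh_gf q (q ^ n * x) (q ^ n * y) t)"

context
  fixes q :: complex
  assumes norm_q: "norm q < 1"
begin

lemma norm_qpower_mult_le: "norm (q ^ n * a) \<le> norm a"
  using norm_q by (simp add: norm_mult norm_power mult_left_le_one_le power_le_one)

lemma qpoch_factor_nonzero: "norm a < 1 \<Longrightarrow> 1 - a * q ^ k \<noteq> 0"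
  using norm_qpower_mult_le[of k a] by (auto simp: mult.commute)

lemma qpoch_nonzero: "norm a < 1 \<Longrightarrow> qpoch a q n \<noteq> 0"
  unfolding qpoch_def using qpoch_factor_nonzero[of a] by (simp add: prod_zero_iff)

lemma qpoch_q_nonzero: "qpoch q q n \<noteq> 0"
  using norm_q by (rule qpoch_nonzero)

lemma one_minus_qpower_Suc_nonzero: "1 - q ^ Suc n \<noteq> 0"
  using qpoch_factor_nonzero[OF norm_q, of n] by simp

lemma convergent_prod_qpoch: "convergent_prod (\<lambda>k. 1 - a * q ^ k)"
proof (intro abs_convergent_prod_imp_convergent_prod summable_imp_abs_convergent_prod)
  have "summable (\<lambda>k. norm a * norm q ^ k)"
    using norm_q by (intro summable_mult summable_geometric) simp
  then show "summable (\<lambda>k. norm (1 - a * q ^ k - 1))"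
    by (simp add: norm_mult norm_power)
qed

lemma qpoch_LIMSEQ: "(\<lambda>n. qpoch a q n) \<longlonglongrightarrow> qpoch_inf a q"
proof -
  have "(\<lambda>n. \<Prod>i\<le>n. 1 - a * q ^ i) \<longlonglongrightarrow> qpoch_inf a q"
    unfolding qpoch_inf_def by (rule convergent_prod_LIMSEQ[OF convergent_prod_qpoch])
  then have "(\<lambda>n. qpoch a q (Suc n)) \<longlonglongrightarrow> qpoch_inf a q"
    by (simp add: qpoch_def lessThan_Suc_atMost)
  then show ?thesis by (simp add: filterlim_sequentially_Suc)
qed

lemma qpoch_inf_split:
  assumes "\<And>k. k < n \<Longrightarrow> 1 - a * q ^ k \<noteq> 0"
  shows "qpoch_inf a q = qpoch a q n * qpoch_inf (q ^ n * a) q"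
proof -
  have "qpoch_inf a q = (\<Prod>i. 1 - a * q ^ (i + n)) * qpoch a q n"
    unfolding qpoch_inf_def qpoch_def
    by (rule prodinf_split_initial_segment[OF convergent_prod_qpoch assms])
  also have "(\<lambda>i. 1 - a * q ^ (i + n)) = (\<lambda>i. 1 - (q ^ n * a) * q ^ i)"
    by (simp add: power_add algebra_simps)
  finally show ?thesis by (simp add: qpoch_inf_def)
qed

lemma qpoch_inf_nonzero: "(\<And>k. 1 - a * q ^ k \<noteq> 0) \<Longrightarrow> qpoch_inf a q \<noteq> 0"
  unfolding qpoch_inf_def by (rule prodinf_nonzero[OF convergent_prod_qpoch])

lemma qpoch_inf_nonzero_if_norm_less_1: "norm a < 1 \<Longrightarrow> qpoch_inf a q \<noteq> 0"
  by (intro qpoch_inf_nonzero qpoch_factor_nonzero)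

lemma sum_norm_qpower_le: "(\<Sum>k<n. norm q ^ k) \<le> 1 / (1 - norm q)"
proof -
  have "(\<Sum>k<n. norm q ^ k) = (1 - norm q ^ n) / (1 - norm q)"
    using norm_q by (simp add: sum_gp_strict)
  also have "\<dots> \<le> 1 / (1 - norm q)"
    using norm_q by (intro divide_right_mono) auto
  finally show ?thesis .
qed

lemma norm_qpoch_le: "norm (qpoch a q n) \<le> exp (norm a / (1 - norm q))"
proof -
  have "norm (qpoch a q n) = (\<Prod>k<n. norm (1 - a * q ^ k))"
    by (simp add: qpoch_def prod_norm)
  also have "\<dots> \<le> (\<Prod>k<n. exp (norm a * norm q ^ k))"
  proof (rule prod_mono)
    fix k
    have "norm (1 - a * q ^ k) \<le> 1 + norm a * norm q ^ k"
      by (metis norm_one norm_triangle_ineq4 norm_mult norm_power)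
    also have "\<dots> \<le> exp (norm a * norm q ^ k)" by simp
    finally show "0 \<le> norm (1 - a * q ^ k) \<and> norm (1 - a * q ^ k) \<le> exp (norm a * norm q ^ k)"
      by simp
  qed
  also have "\<dots> = exp (norm a * (\<Sum>k<n. norm q ^ k))"
    by (simp add: exp_sum sum_distrib_left)
  also have "\<dots> \<le> exp (norm a / (1 - norm q))"
    using mult_left_mono[OF sum_norm_qpower_le, of "norm a" n] by simp
  finally show ?thesis .
qed

lemma norm_qpoch_inf_le: "norm (qpoch_inf a q) \<le> exp (norm a / (1 - norm q))"
  by (rule LIMSEQ_le_const2[OF tendsto_norm[OF qpoch_LIMSEQ]]) (use norm_qpoch_le in auto)

text \<open>Both factors of the splitting (a;q)_inf = (a;q)_n (q^n a;q)_inf are bounded, so each of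
  them is also bounded away from zero.\<close>

lemma norm_qpoch_factors_inverse_le:
  assumes "norm a < 1"
  shows "1 / norm (qpoch a q n) \<le> exp (norm a / (1 - norm q)) / norm (qpoch_inf a q)"
    and "1 / norm (qpoch_inf (q ^ n * a) q) \<le> exp (norm a / (1 - norm q)) / norm (qpoch_inf a q)"
proof -
  have split: "qpoch_inf a q = qpoch a q n * qpoch_inf (q ^ n * a) q"
    by (intro qpoch_inf_split qpoch_factor_nonzero assms)
  have nonzero: "qpoch_inf a q \<noteq> 0"
    using qpoch_inf_nonzero_if_norm_less_1[OF assms] .
  have "norm (qpoch_inf (q ^ n * a) q) \<le> exp (norm (q ^ n * a) / (1 - norm q))"
    by (rule norm_qpoch_inf_le)
  also have "\<dots> \<le> exp (norm a / (1 - norm q))"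
    using norm_q norm_qpower_mult_le[of n a] by (simp add: divide_right_mono)
  finally show "1 / norm (qpoch a q n) \<le> exp (norm a / (1 - norm q)) / norm (qpoch_inf a q)"
    using nonzero split by (simp add: norm_mult field_simps)
  show "1 / norm (qpoch_inf (q ^ n * a) q) \<le> exp (norm a / (1 - norm q)) / norm (qpoch_inf a q)"
    using nonzero split norm_qpoch_le[of a n] by (simp add: norm_mult field_simps)
qed

lemma norm_cauchyP_le: "norm (cauchyP q l x y) \<le> max 1 (norm x) ^ l * exp (norm y / (1 - norm q))"
proof -
  let ?m = "max 1 (norm x)"
  have "norm (cauchyP q l x y) = (\<Prod>k<l. norm (x - q ^ k * y))"
    by (simp add: cauchyP_def prod_norm)
  also have "\<dots> \<le> (\<Prod>k<l. ?m * exp (norm y * norm q ^ k))"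
  proof (rule prod_mono)
    fix k
    have "norm (x - q ^ k * y) \<le> norm x + norm y * norm q ^ k"
      by (metis norm_triangle_ineq4 norm_mult norm_power mult.commute)
    also have "\<dots> \<le> ?m + ?m * (norm y * norm q ^ k)"
      using mult_right_mono[of 1 ?m "norm y * norm q ^ k"] by (intro add_mono) auto
    also have "\<dots> = ?m * (1 + norm y * norm q ^ k)"
      by (simp add: algebra_simps)
    also have "\<dots> \<le> ?m * exp (norm y * norm q ^ k)"
      by (intro mult_left_mono) auto
    finally show "0 \<le> norm (x - q ^ k * y) \<and> norm (x - q ^ k * y) \<le> ?m * exp (norm y * norm q ^ k)"
      by simp
  qed
  also have "\<dots> = ?m ^ l * exp (norm y * (\<Sum>k<l. norm q ^ k))"
    by (simp add: exp_sum sum_distrib_left prod.distrib)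
  also have "\<dots> \<le> ?m ^ l * exp (norm y / (1 - norm q))"
    using mult_left_mono[OF sum_norm_qpower_le, of "norm y" l] by simp
  finally show ?thesis .
qed

lemma summable_norm_q_binomial:
  assumes "norm (x * z) < 1"
  shows "summable (\<lambda>l. norm (cauchyP q l x y / qpoch q q l * z ^ l))"
proof -
  define c where "c = (1 + norm (x * z)) / 2"
  have "c < 1" and "norm (x * z) < c" using assms by (auto simp: c_def)
  define ratio where "ratio l = norm ((x - q ^ l * y) * z / (1 - q ^ Suc l))" for l
  have q0: "(\<lambda>l. q ^ l) \<longlonglongrightarrow> 0" using norm_q by (rule LIMSEQ_power_zero)
  then have "(\<lambda>l. q ^ Suc l) \<longlonglongrightarrow> 0" by (rule LIMSEQ_Suc)
  with q0 have "ratio \<longlonglongrightarrow> norm ((x - 0 * y) * z / (1 - 0))"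
    unfolding ratio_def using norm_q by (intro tendsto_intros) auto
  then have "ratio \<longlonglongrightarrow> norm (x * z)" by simp
  from order_tendstoD(2)[OF this \<open>norm (x * z) < c\<close>]
  obtain N where N: "\<And>l. l \<ge> N \<Longrightarrow> ratio l < c"
    by (auto simp: eventually_sequentially)
  show ?thesis
  proof (rule summable_ratio_test[OF \<open>c < 1\<close>, of N])
    fix l assume "l \<ge> N"
    have "cauchyP q (Suc l) x y / qpoch q q (Suc l) * z ^ Suc l
        = (cauchyP q l x y / qpoch q q l * z ^ l) * ((x - q ^ l * y) * z / (1 - q ^ Suc l))"
      using qpoch_q_nonzero[of l] one_minus_qpower_Suc_nonzero[of l]
      by (simp add: cauchyP_Suc qpoch_Suc field_simps)
    then have "norm (norm (cauchyP q (Suc l) x y / qpoch q q (Suc l) * z ^ Suc l))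
        = norm (cauchyP q l x y / qpoch q q l * z ^ l) * ratio l"
      unfolding ratio_def real_norm_def abs_norm_cancel by (simp only: norm_mult)
    also have "\<dots> \<le> norm (cauchyP q l x y / qpoch q q l * z ^ l) * c"
      using N[OF \<open>l \<ge> N\<close>] by (intro mult_left_mono) auto
    finally show "norm (norm (cauchyP q (Suc l) x y / qpoch q q (Suc l) * z ^ Suc l))
        \<le> c * norm (norm (cauchyP q l x y / qpoch q q l * z ^ l))"
      by (simp add: mult.commute)
  qed
qed

lemma sums_q_binomial_series:
  "norm (x * w) < 1 \<Longrightarrow> (\<lambda>l. cauchyP q l x y / qpoch q q l * w ^ l) sums q_binomial_series q x y w"
  unfolding q_binomial_series_def
  by (rule summable_sums[OF summable_norm_cancel[OF summable_norm_q_binomial]])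

lemma q_binomial_functional_equation:
  assumes "norm (x * w) < 1"
  shows "(1 - x * w) * q_binomial_series q x y w = (1 - y * w) * q_binomial_series q x y (q * w)"
proof -
  define c where "c l = cauchyP q l x y / qpoch q q l" for l
  define F where "F = q_binomial_series q x y"
  have "norm (x * (q * w)) < 1"
    using assms norm_qpower_mult_le[of 1 "x * w"] by (simp add: mult_ac)
  then have sums: "(\<lambda>l. c l * w ^ l) sums F w" "(\<lambda>l. c l * (q * w) ^ l) sums F (q * w)"
    unfolding F_def c_def using assms by (simp_all only: sums_q_binomial_series)
  have coeff: "c (Suc l) * (1 - q ^ Suc l) = c l * (x - q ^ l * y)" for l
    using qpoch_q_nonzero[of l] one_minus_qpower_Suc_nonzero[of l]
    by (simp add: c_def cauchyP_Suc qpoch_Suc field_simps)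
  have shift: "(\<lambda>l. c (Suc l) * w ^ Suc l - c (Suc l) * (q * w) ^ Suc l)
      = (\<lambda>l. w * (x * (c l * w ^ l) - y * (c l * (q * w) ^ l)))"
  proof
    fix l
    have "c (Suc l) * w ^ Suc l - c (Suc l) * (q * w) ^ Suc l
        = (c (Suc l) * (1 - q ^ Suc l)) * w ^ Suc l"
      by (simp add: power_mult_distrib algebra_simps)
    also have "\<dots> = (c l * (x - q ^ l * y)) * w ^ Suc l"
      by (simp only: coeff)
    also have "\<dots> = w * (x * (c l * w ^ l) - y * (c l * (q * w) ^ l))"
      by (simp add: power_mult_distrib algebra_simps)
    finally show "c (Suc l) * w ^ Suc l - c (Suc l) * (q * w) ^ Suc l
        = w * (x * (c l * w ^ l) - y * (c l * (q * w) ^ l))" .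
  qed
  have "(\<lambda>l. c l * w ^ l - c l * (q * w) ^ l) sums (F w - F (q * w))"
    by (intro sums_diff sums)
  then have "(\<lambda>l. c (Suc l) * w ^ Suc l - c (Suc l) * (q * w) ^ Suc l) sums (F w - F (q * w))"
    by (subst sums_Suc_iff) simp
  then have "(\<lambda>l. w * (x * (c l * w ^ l) - y * (c l * (q * w) ^ l))) sums (F w - F (q * w))"
    by (simp only: shift)
  moreover have "(\<lambda>l. w * (x * (c l * w ^ l) - y * (c l * (q * w) ^ l)))
      sums (w * (x * F w - y * F (q * w)))"
    by (intro sums_mult sums_diff sums)
  ultimately have "F w - F (q * w) = w * (x * F w - y * F (q * w))"
    by (rule sums_unique2)
  then show ?thesis
    by (simp add: F_def algebra_simps)
qed

lemma q_binomial_series_iterate: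
  assumes "norm (x * z) < 1"
  shows "q_binomial_series q x y z * qpoch (x * z) q n
           = qpoch (y * z) q n * q_binomial_series q x y (q ^ n * z)"
proof (induction n)
  case 0
  then show ?case by simp
next
  case (Suc n)
  let ?F = "q_binomial_series q x y"
  have "norm (x * (q ^ n * z)) < 1"
    using assms norm_qpower_mult_le[of n "x * z"] by (simp add: mult_ac)
  have "?F z * qpoch (x * z) q (Suc n) = (1 - x * (q ^ n * z)) * (?F z * qpoch (x * z) q n)"
    by (simp add: qpoch_Suc algebra_simps)
  also have "\<dots> = qpoch (y * z) q n * ((1 - x * (q ^ n * z)) * ?F (q ^ n * z))"
    by (simp add: Suc.IH)
  also have "\<dots> = qpoch (y * z) q n * ((1 - y * (q ^ n * z)) * ?F (q * (q ^ n * z)))"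
    using q_binomial_functional_equation[OF \<open>norm (x * (q ^ n * z)) < 1\<close>] by simp
  also have "\<dots> = qpoch (y * z) q (Suc n) * ?F (q ^ Suc n * z)"
    by (simp add: qpoch_Suc algebra_simps)
  finally show ?case .
qed

lemma q_binomial_series_0 [simp]: "q_binomial_series q x y 0 = 1"
  unfolding q_binomial_series_def powser_zero by simp

lemma isCont_q_binomial_series: "isCont (q_binomial_series q x y) 0"
proof -
  define K where "K = complex_of_real (1 / (1 + norm x))"
  have "norm (x * K) = norm x / (1 + norm x)"
    unfolding K_def norm_mult norm_of_real by simp
  then have "norm (x * K) < 1"
    by (simp add: add_pos_nonneg)
  then have "summable (\<lambda>l. cauchyP q l x y / qpoch q q l * K ^ l)"
    by (rule summable_norm_cancel[OF summable_norm_q_binomial])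
  moreover have "norm (0::complex) < norm K"
    unfolding K_def norm_of_real by (simp add: add_pos_nonneg)
  ultimately have "isCont (\<lambda>w. \<Sum>l. cauchyP q l x y / qpoch q q l * w ^ l) 0"
    by (rule isCont_powser)
  then show ?thesis
    by (simp add: q_binomial_series_def[abs_def])
qed

theorem q_binomial_sums:
  assumes "norm (x * z) < 1"
  shows "(\<lambda>l. cauchyP q l x y / qpoch q q l * z ^ l) sums (qpoch_inf (y * z) q / qpoch_inf (x * z) q)"
proof -
  let ?F = "q_binomial_series q x y"
  have "(\<lambda>n. q ^ n * z) \<longlonglongrightarrow> 0"
    using norm_q by (intro tendsto_mult_left_zero LIMSEQ_power_zero)
  with isCont_q_binomial_series have "(\<lambda>n. ?F (q ^ n * z)) \<longlonglongrightarrow> ?F 0"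
    by (rule isCont_tendsto_compose)
  then have "(\<lambda>n. qpoch (y * z) q n * ?F (q ^ n * z)) \<longlonglongrightarrow> qpoch_inf (y * z) q * 1"
    by (intro tendsto_mult qpoch_LIMSEQ) simp
  then have "(\<lambda>n. ?F z * qpoch (x * z) q n) \<longlonglongrightarrow> qpoch_inf (y * z) q"
    by (simp add: q_binomial_series_iterate[OF assms])
  moreover have "(\<lambda>n. ?F z * qpoch (x * z) q n) \<longlonglongrightarrow> ?F z * qpoch_inf (x * z) q"
    by (intro tendsto_mult_left qpoch_LIMSEQ)
  ultimately have "qpoch_inf (y * z) q = ?F z * qpoch_inf (x * z) q"
    by (rule LIMSEQ_unique)
  then have "?F z = qpoch_inf (y * z) q / qpoch_inf (x * z) q"
    using qpoch_inf_nonzero_if_norm_less_1[OF assms] by (simp add: field_simps)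
  then show ?thesis
    using sums_q_binomial_series[OF assms, of y] by simp
qed

corollary euler_sums: "norm t < 1 \<Longrightarrow> (\<lambda>r. t ^ r / qpoch q q r) sums (1 / qpoch_inf t q)"
  using q_binomial_sums[of 1 t 0] by simp

lemma summable_norm_euler: "norm t < 1 \<Longrightarrow> summable (\<lambda>r. norm (t ^ r / qpoch q q r))"
  using summable_norm_q_binomial[of 1 t 0] by simp

lemma cauchyP_shifted_series_sums:
  assumes "norm (x * z) < 1"
  shows "(\<lambda>j. cauchyP q (n + j) x y * z ^ j / qpoch q q j)
           sums (cauchyP q n x y * qpoch_inf (q ^ n * y * z) q / qpoch_inf (x * z) q)"
proof -
  have "(\<lambda>j. cauchyP q n x y * (cauchyP q j x (q ^ n * y) / qpoch q q j * z ^ j))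
      sums (cauchyP q n x y * (qpoch_inf (q ^ n * y * z) q / qpoch_inf (x * z) q))"
    using assms by (intro sums_mult q_binomial_sums)
  then show ?thesis
    by (simp add: cauchyP_add mult.assoc)
qed

lemma qbinom_pascal:
  assumes "l < n"
  shows "qbinom q (Suc n) (Suc l) = qbinom q n l + q ^ Suc l * qbinom q n (Suc l)"
proof -
  obtain d where n: "n = l + Suc d"
    using assms less_iff_Suc_add by auto
  have pascal_field: "M / (A * (B * b)) + (1 - a) * (M / (A * a * B))
      = M * (1 - (1 - a) * (1 - b)) / (A * a * (B * b))"
    if "A \<noteq> 0" "B \<noteq> 0" "a \<noteq> 0" "b \<noteq> 0" for M A B a b :: complex
    using that by (simp add: field_simps)
  have diffs: "Suc n - Suc l = Suc d" "n - l = Suc d" "n - Suc l = d"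
    using n by simp_all
  have "q ^ Suc n = q ^ Suc l * q ^ Suc d"
    by (simp add: n power_add[symmetric])
  then have "qbinom q (Suc n) (Suc l) = qpoch q q n * (1 - q ^ Suc l * q ^ Suc d)
      / (qpoch q q l * (1 - q ^ Suc l) * (qpoch q q d * (1 - q ^ Suc d)))"
    unfolding qbinom_def diffs by (simp only: qpoch_q_Suc)
  moreover have "qbinom q n l = qpoch q q n / (qpoch q q l * (qpoch q q d * (1 - q ^ Suc d)))"
    unfolding qbinom_def diffs by (simp only: qpoch_q_Suc)
  moreover have "qbinom q n (Suc l) = qpoch q q n / (qpoch q q l * (1 - q ^ Suc l) * qpoch q q d)"
    unfolding qbinom_def diffs by (simp only: qpoch_q_Suc)
  ultimately show ?thesis
    using pascal_field[OF qpoch_q_nonzero[of l] qpoch_q_nonzero[of d]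
        one_minus_qpower_Suc_nonzero[of l] one_minus_qpower_Suc_nonzero[of d], of "qpoch q q n"]
    by simp
qed

lemma gauss_coeff_eq_qbinom: "l \<le> m \<Longrightarrow> gauss_coeff q m l = qbinom q m l"
proof (induction m arbitrary: l)
  case 0
  then show ?case by (simp add: qbinom_def)
next
  case (Suc m)
  show ?case
  proof (cases l)
    case 0
    then show ?thesis using qpoch_q_nonzero[of "Suc m"] by (simp add: qbinom_def)
  next
    case (Suc l')
    show ?thesis
    proof (cases "l' = m")
      case True
      then show ?thesis
        using Suc Suc.IH[of m] qpoch_q_nonzero[of m] qpoch_q_nonzero[of "Suc m"]
        by (simp add: gauss_coeff_eq_0 qbinom_def)
    next
      case False
      then have "l' < m" using Suc Suc.prems by simp
      then show ?thesis
        using Suc Suc.IH[of l'] Suc.IH[of "Suc l'"] qbinom_pascal by simp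
    qed
  qed
qed

lemma rsh_eq_sum_gauss_coeff:
  assumes "m \<le> N"
  shows "rsh q m x y = (\<Sum>l\<le>N. gauss_coeff q m l * cauchyP q l x y)"
proof -
  have "rsh q m x y = (\<Sum>l\<le>m. gauss_coeff q m l * cauchyP q l x y)"
    unfolding rsh_def by (rule sum.cong) (auto simp: gauss_coeff_eq_qbinom)
  also have "\<dots> = (\<Sum>l\<le>N. gauss_coeff q m l * cauchyP q l x y)"
    by (rule sum.mono_neutral_left) (use assms in \<open>auto simp: gauss_coeff_eq_0\<close>)
  finally show ?thesis .
qed

lemma rsh_Suc: "rsh q (Suc m) x y = x * rsh q m x y + (1 - y) * rsh q m (q * x) (q * y)"
proof -
  \<comment> \<open>The q-Pascal rule, together with P_{l+1} = P_l (x - q^l y) and P_l(qx,qy) = q^l P_l(x,y).\<close>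
  let ?P = "\<lambda>l. cauchyP q l x y" and ?g = "gauss_coeff q m"
  have x_part: "(\<Sum>l\<le>Suc m. ?g l * ?P l * (x - q ^ l * y)) = (\<Sum>l\<le>m. ?g l * ?P (Suc l))"
    by (simp add: cauchyP_Suc gauss_coeff_eq_0 mult.assoc)
  have q_part: "(\<Sum>l\<le>Suc m. ?g l * (q ^ l * ?P l))
      = 1 + (\<Sum>l\<le>m. q ^ Suc l * ?g (Suc l) * ?P (Suc l))"
    by (simp only: sum.atMost_Suc_shift) (simp add: mult_ac)
  have pascal: "(\<Sum>l\<le>Suc m. gauss_coeff q (Suc m) l * ?P l)
      = 1 + (\<Sum>l\<le>m. ?g l * ?P (Suc l)) + (\<Sum>l\<le>m. q ^ Suc l * ?g (Suc l) * ?P (Suc l))"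
    by (simp only: sum.atMost_Suc_shift) (simp add: sum.distrib distrib_right mult.assoc)
  have "x * rsh q m x y + (1 - y) * rsh q m (q * x) (q * y)
      = x * (\<Sum>l\<le>Suc m. ?g l * ?P l) + (1 - y) * (\<Sum>l\<le>Suc m. ?g l * (q ^ l * ?P l))"
    by (simp add: rsh_eq_sum_gauss_coeff[of m "Suc m"] cauchyP_scale)
  also have "\<dots> = (\<Sum>l\<le>Suc m. ?g l * ?P l * (x - q ^ l * y)) + (\<Sum>l\<le>Suc m. ?g l * (q ^ l * ?P l))"
    by (simp add: sum_distrib_left sum.distrib[symmetric] algebra_simps)
  also have "\<dots> = (\<Sum>l\<le>Suc m. gauss_coeff q (Suc m) l * ?P l)"
    unfolding x_part q_part pascal by simp
  also have "\<dots> = rsh q (Suc m) x y"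
    by (rule rsh_eq_sum_gauss_coeff[symmetric]) simp
  finally show ?thesis by simp
qed

lemma rsh_add:
  "rsh q (m + k) x y
     = (\<Sum>n\<le>k. gauss_coeff q k n * qpoch y q n * x ^ (k - n) * rsh q m (q ^ n * x) (q ^ n * y))"
proof (induction k arbitrary: m)
  case 0
  then show ?case by simp
next
  case (Suc k)
  \<comment> \<open>Apply the recurrence termwise; the two resulting sums recombine by the q-Pascal rule.\<close>
  let ?g = "gauss_coeff q k"
  define h where "h n = rsh q m (q ^ n * x) (q ^ n * y)" for n
  have "rsh q (m + Suc k) x y
      = (\<Sum>n\<le>k. ?g n * qpoch y q n * x ^ (k - n) * rsh q (Suc m) (q ^ n * x) (q ^ n * y))"
    using Suc.IH[of "Suc m"] by simp
  also have "\<dots> = (\<Sum>n\<le>k. ?g n * qpoch y q n * x ^ (k - n) * (q ^ n * x * h n + (1 - q ^ n * y) * h (Suc n)))"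
    by (rule sum.cong) (simp_all add: rsh_Suc h_def mult.assoc)
  also have "\<dots> = (\<Sum>n\<le>k. ?g n * q ^ n * qpoch y q n * x ^ (Suc k - n) * h n)
                 + (\<Sum>n\<le>k. ?g n * qpoch y q (Suc n) * x ^ (k - n) * h (Suc n))"
    by (simp only: sum.distrib[symmetric], rule sum.cong) (auto simp: qpoch_Suc Suc_diff_le algebra_simps)
  also have "(\<Sum>n\<le>k. ?g n * q ^ n * qpoch y q n * x ^ (Suc k - n) * h n)
      = (\<Sum>n\<le>Suc k. ?g n * q ^ n * qpoch y q n * x ^ (Suc k - n) * h n)"
    by (simp add: gauss_coeff_eq_0)
  also have "\<dots> = x ^ Suc k * h 0
      + (\<Sum>n\<le>k. q ^ Suc n * ?g (Suc n) * qpoch y q (Suc n) * x ^ (k - n) * h (Suc n))"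
    by (simp only: sum.atMost_Suc_shift) (simp add: algebra_simps)
  also have "x ^ Suc k * h 0 + (\<Sum>n\<le>k. q ^ Suc n * ?g (Suc n) * qpoch y q (Suc n) * x ^ (k - n) * h (Suc n))
      + (\<Sum>n\<le>k. ?g n * qpoch y q (Suc n) * x ^ (k - n) * h (Suc n))
      = (\<Sum>n\<le>Suc k. gauss_coeff q (Suc k) n * qpoch y q n * x ^ (Suc k - n) * h n)"
    by (simp only: sum.atMost_Suc_shift) (simp add: sum.distrib[symmetric] algebra_simps)
  finally show ?case by (simp add: h_def)
qed

lemma rsh_gf_sums:
  assumes "norm t < 1" "norm (x * t) < 1"
  shows "(\<lambda>m. rsh q m x y * t ^ m / qpoch q q m) sums rsh_gf q x y t"
proof -
  let ?a = "\<lambda>l. cauchyP q l x y / qpoch q q l * t ^ l" and ?b = "\<lambda>r. t ^ r / qpoch q q r"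
  have "(\<lambda>m. \<Sum>i\<le>m. ?a i * ?b (m - i)) sums ((\<Sum>l. ?a l) * (\<Sum>r. ?b r))"
    by (rule Cauchy_product_sums[OF summable_norm_q_binomial summable_norm_euler]) (use assms in auto)
  moreover have "(\<Sum>l. ?a l) * (\<Sum>r. ?b r) = rsh_gf q x y t"
    using q_binomial_sums[OF assms(2), of y] euler_sums[OF assms(1)]
    by (simp add: sums_iff rsh_gf_def)
  moreover have "(\<Sum>i\<le>m. ?a i * ?b (m - i)) = rsh q m x y * t ^ m / qpoch q q m" for m
  proof -
    have "(\<Sum>i\<le>m. ?a i * ?b (m - i)) = (\<Sum>i\<le>m. qbinom q m i * cauchyP q i x y * t ^ m / qpoch q q m)"
    proof (rule sum.cong)
      fix i assume "i \<in> {..m}"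
      then have "t ^ m = t ^ i * t ^ (m - i)"
        by (simp add: power_add[symmetric])
      then show "?a i * ?b (m - i) = qbinom q m i * cauchyP q i x y * t ^ m / qpoch q q m"
        using qpoch_q_nonzero[of m] qpoch_q_nonzero[of i] qpoch_q_nonzero[of "m - i"]
        by (simp add: qbinom_def field_simps)
    qed simp
    then show ?thesis
      by (simp add: rsh_def sum_distrib_right sum_divide_distrib)
  qed
  ultimately show ?thesis by simp
qed

lemma rsh_shifted_gf_sums:
  assumes "norm t < 1" "norm (x * t) < 1"
  shows "(\<lambda>m. rsh q (m + k) x y * t ^ m / qpoch q q m) sums rsh_shifted_gf q x y t k"
proof -
  have "norm (q ^ n * x * t) < 1" for n
    using assms(2) norm_qpower_mult_le[of n "x * t"] by (simp add: mult.assoc)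
  then have "(\<lambda>m. \<Sum>n\<le>k. gauss_coeff q k n * qpoch y q n * x ^ (k - n) *
        (rsh q m (q ^ n * x) (q ^ n * y) * t ^ m / qpoch q q m)) sums rsh_shifted_gf q x y t k"
    unfolding rsh_shifted_gf_def using assms(1) by (intro sums_sum sums_mult rsh_gf_sums)
  moreover have "(\<Sum>n\<le>k. gauss_coeff q k n * qpoch y q n * x ^ (k - n) *
        (rsh q m (q ^ n * x) (q ^ n * y) * t ^ m / qpoch q q m)) = rsh q (m + k) x y * t ^ m / qpoch q q m" for m
    by (simp add: rsh_add[of m k] sum_distrib_left sum_distrib_right sum_divide_distrib mult_ac)
  ultimately show ?thesis by simp
qed

lemma inverse_norm_qpoch_q_bounded: "\<exists>K. \<forall>n. 1 / norm (qpoch q q n) \<le> K"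
  using norm_qpoch_factors_inverse_le(1)[OF norm_q] by blast

lemma norm_qbinom_bounded: "\<exists>B. \<forall>N l. l \<le> N \<longrightarrow> norm (qbinom q N l) \<le> B"
proof -
  obtain K where K: "\<And>n. 1 / norm (qpoch q q n) \<le> K"
    using inverse_norm_qpoch_q_bounded by blast
  have "norm (qbinom q N l) \<le> exp (norm q / (1 - norm q)) * K * K" for N l
  proof -
    have "norm (qbinom q N l) = norm (qpoch q q N) * (1 / norm (qpoch q q l)) * (1 / norm (qpoch q q (N - l)))"
      by (simp add: qbinom_def norm_divide norm_mult)
    also have "\<dots> \<le> exp (norm q / (1 - norm q)) * K * K"
      using K[of 0] by (intro mult_mono norm_qpoch_le K) auto
    finally show ?thesis .
  qed
  then show ?thesis by blast
qed

lemma norm_rsh_bounded: "\<exists>C. \<forall>N. norm (rsh q N x y) \<le> C * (real N + 1) * max 1 (norm x) ^ N"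
proof -
  obtain B where B: "\<And>N l. l \<le> N \<Longrightarrow> norm (qbinom q N l) \<le> B"
    using norm_qbinom_bounded by blast
  define E where "E = exp (norm y / (1 - norm q))"
  have "norm (rsh q N x y) \<le> B * E * (real N + 1) * max 1 (norm x) ^ N" for N
  proof -
    have "norm (rsh q N x y) \<le> (\<Sum>l\<le>N. norm (qbinom q N l) * norm (cauchyP q l x y))"
      unfolding rsh_def norm_mult[symmetric] by (rule norm_sum)
    also have "\<dots> \<le> (\<Sum>l\<le>N. B * (max 1 (norm x) ^ N * E))"
    proof (rule sum_mono)
      fix l assume "l \<in> {..N}"
      then have "norm (cauchyP q l x y) \<le> max 1 (norm x) ^ N * E"
        using norm_cauchyP_le[of l x y] power_increasing[of l N "max 1 (norm x)"]
        by (force simp: E_def intro: order_trans mult_right_mono)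
      with \<open>l \<in> {..N}\<close> B[of l N] show "norm (qbinom q N l) * norm (cauchyP q l x y) \<le> B * (max 1 (norm x) ^ N * E)"
        by (intro mult_mono) (auto simp: E_def intro: order_trans[OF norm_ge_zero])
    qed
    finally show ?thesis by (simp add: mult_ac add.commute)
  qed
  then show ?thesis by blast
qed

lemma rsh_mult_rsh_eq_sum:
  "rsh q n x y * rsh q n u v * t ^ n / qpoch q q n
     = (\<Sum>i\<le>n. cauchyP q i u v * t ^ i / qpoch q q i * (rsh q n x y * t ^ (n - i) / qpoch q q (n - i)))"
proof -
  have "rsh q n x y * rsh q n u v * t ^ n / qpoch q q n
      = (\<Sum>i\<le>n. rsh q n x y * t ^ n / qpoch q q n * (qbinom q n i * cauchyP q i u v))"
    by (simp add: rsh_def[of q n u v] sum_distrib_left sum_distrib_right sum_divide_distrib mult_ac)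
  also have "\<dots> = (\<Sum>i\<le>n. cauchyP q i u v * t ^ i / qpoch q q i
      * (rsh q n x y * t ^ (n - i) / qpoch q q (n - i)))"
  proof (rule sum.cong)
    fix i assume "i \<in> {..n}"
    then have "i \<le> n" by simp
    then have "t ^ n = t ^ i * t ^ (n - i)"
      by (simp add: power_add[symmetric])
    with \<open>i \<le> n\<close> show "rsh q n x y * t ^ n / qpoch q q n * (qbinom q n i * cauchyP q i u v)
        = cauchyP q i u v * t ^ i / qpoch q q i * (rsh q n x y * t ^ (n - i) / qpoch q q (n - i))"
      using qpoch_q_nonzero[of n] qpoch_q_nonzero[of i] qpoch_q_nonzero[of "n - i"]
      by (simp add: qbinom_def field_simps)
  qed simp
  finally show ?thesis .
qed

lemma rsh_product_array_bounded:
  "\<exists>M \<ge> 0. \<forall>i j.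
     norm (cauchyP q i u v * t ^ i / qpoch q q i * (rsh q (j + i) x y * t ^ j / qpoch q q j))
       \<le> M * ((real i + 1) * (max 1 (norm u) * max 1 (norm x) * norm t) ^ i)
           * ((real j + 1) * (max 1 (norm x) * norm t) ^ j)"
proof -
  obtain K where K: "\<And>n. 1 / norm (qpoch q q n) \<le> K"
    using inverse_norm_qpoch_q_bounded by blast
  obtain C where C: "\<And>N. norm (rsh q N x y) \<le> C * (real N + 1) * max 1 (norm x) ^ N"
    using norm_rsh_bounded by blast
  have "0 \<le> K" "0 \<le> C"
    using K[of 0] C[of 0] by (auto intro: order_trans[OF norm_ge_zero])
  define E where "E = exp (norm v / (1 - norm q))"
  have "norm (cauchyP q i u v * t ^ i / qpoch q q i * (rsh q (j + i) x y * t ^ j / qpoch q q j))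
      \<le> (E * K * C * K) * ((real i + 1) * (max 1 (norm u) * max 1 (norm x) * norm t) ^ i)
          * ((real j + 1) * (max 1 (norm x) * norm t) ^ j)" for i j
  proof -
    have "norm (cauchyP q i u v * t ^ i / qpoch q q i * (rsh q (j + i) x y * t ^ j / qpoch q q j))
        = norm (cauchyP q i u v) * norm t ^ i * (1 / norm (qpoch q q i))
          * (norm (rsh q (j + i) x y) * norm t ^ j * (1 / norm (qpoch q q j)))"
      by (simp add: norm_mult norm_divide norm_power)
    also have "\<dots> \<le> (max 1 (norm u) ^ i * E) * norm t ^ i * K
        * ((C * (real (j + i) + 1) * max 1 (norm x) ^ (j + i)) * norm t ^ j * K)"
      using \<open>0 \<le> K\<close> \<open>0 \<le> C\<close> norm_cauchyP_le[of i u v]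
      by (intro mult_mono K C) (auto simp: E_def)
    also have "\<dots> \<le> (max 1 (norm u) ^ i * E) * norm t ^ i * K
        * ((C * ((real i + 1) * (real j + 1)) * max 1 (norm x) ^ (j + i)) * norm t ^ j * K)"
      using \<open>0 \<le> K\<close> \<open>0 \<le> C\<close>
      by (intro mult_mono order_refl) (auto simp: E_def algebra_simps)
    also have "\<dots> = (E * K * C * K) * ((real i + 1) * (max 1 (norm u) * max 1 (norm x) * norm t) ^ i)
        * ((real j + 1) * (max 1 (norm x) * norm t) ^ j)"
      by (simp add: power_mult_distrib power_add mult_ac)
    finally show ?thesis .
  qed
  moreover have "0 \<le> E * K * C * K"
    using \<open>0 \<le> K\<close> \<open>0 \<le> C\<close> by (simp add: E_def)
  ultimately show ?thesis by blast
qed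

lemma rsh_product_series_sums:
  assumes "norm t < 1" "norm (x * t) < 1" "norm (u * t) < 1" "norm (u * x * t) < 1"
  shows "(\<lambda>n. rsh q n x y * rsh q n u v * t ^ n / qpoch q q n)
           sums (\<Sum>k. cauchyP q k u v * t ^ k / qpoch q q k * rsh_shifted_gf q x y t k)"
proof -
  define a where "a i j = cauchyP q i u v * t ^ i / qpoch q q i * (rsh q (j + i) x y * t ^ j / qpoch q q j)"
    for i j
  define r1 where "r1 = max 1 (norm u) * max 1 (norm x) * norm t"
  define r2 where "r2 = max 1 (norm x) * norm t"
  obtain M where "M \<ge> 0" and bound: "\<And>i j. norm (a i j) \<le> (M * ((real i + 1) * r1 ^ i)) * ((real j + 1) * r2 ^ j)"
    using rsh_product_array_bounded[of u v t x y] unfolding a_def r1_def r2_def by (auto simp: mult.assoc)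
  have "0 \<le> r1" "r1 < 1"
    using mult_max_1_less_1[of "norm u" "norm x" "norm t"] assms
    by (auto simp: r1_def norm_mult mult_ac)
  have "0 \<le> r2" "r2 < 1"
    using mult_max_1_less_1[of 0 "norm x" "norm t"] assms
    by (auto simp: r2_def norm_mult mult_ac)
  have rows: "(\<lambda>j. a i j) sums (cauchyP q i u v * t ^ i / qpoch q q i * rsh_shifted_gf q x y t i)" for i
    unfolding a_def using assms(1,2) by (intro sums_mult rsh_shifted_gf_sums)
  have "(\<lambda>n. \<Sum>i\<le>n. a i (n - i))
      sums (\<Sum>i. cauchyP q i u v * t ^ i / qpoch q q i * rsh_shifted_gf q x y t i)"
    using \<open>0 \<le> M\<close> \<open>0 \<le> r1\<close> \<open>0 \<le> r2\<close>
    by (intro dominated_double_series_rows_antidiagonals(2)[OF bound _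
          summable_linear_times_geometric[OF \<open>0 \<le> r2\<close> \<open>r2 < 1\<close>] _ _ rows]
        summable_mult summable_linear_times_geometric[OF \<open>0 \<le> r1\<close> \<open>r1 < 1\<close>]) auto
  then show ?thesis
    by (simp add: a_def rsh_mult_rsh_eq_sum)
qed

lemma norm_rsh_gf_qpower_bounded:
  assumes "norm (x * t) < 1"
  shows "\<exists>C. \<forall>n. norm (rsh_gf q (q ^ n * x) (q ^ n * y) t) \<le> C"
proof -
  define Ex where "Ex = exp (norm (x * t) / (1 - norm q)) / norm (qpoch_inf (x * t) q)"
  define Ey where "Ey = exp (norm (y * t) / (1 - norm q))"
  have "norm (rsh_gf q (q ^ n * x) (q ^ n * y) t) \<le> Ey * (1 / norm (qpoch_inf t q)) * Ex" for n
  proof -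
    have "norm (qpoch_inf (q ^ n * (y * t)) q) \<le> exp (norm (q ^ n * (y * t)) / (1 - norm q))"
      by (rule norm_qpoch_inf_le)
    also have "\<dots> \<le> Ey"
      using norm_q norm_qpower_mult_le[of n "y * t"] by (simp add: Ey_def divide_right_mono)
    finally have "norm (qpoch_inf (q ^ n * (y * t)) q) \<le> Ey" .
    have "norm (rsh_gf q (q ^ n * x) (q ^ n * y) t) = norm (qpoch_inf (q ^ n * (y * t)) q)
        * (1 / norm (qpoch_inf t q)) * (1 / norm (qpoch_inf (q ^ n * (x * t)) q))"
      by (simp add: rsh_gf_def norm_mult norm_divide mult.assoc)
    also have "\<dots> \<le> Ey * (1 / norm (qpoch_inf t q)) * Ex"
      using \<open>norm (qpoch_inf (q ^ n * (y * t)) q) \<le> Ey\<close>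
        norm_qpoch_factors_inverse_le(2)[OF assms, of n]
      by (intro mult_mono order_refl) (auto simp: Ex_def Ey_def)
    finally show ?thesis .
  qed
  then show ?thesis by blast
qed

lemma cauchyP_mult_rsh_shifted_gf_eq_sum:
  "cauchyP q k u v * t ^ k / qpoch q q k * rsh_shifted_gf q x y t k
     = (\<Sum>n\<le>k. qpoch y q n * t ^ n * rsh_gf q (q ^ n * x) (q ^ n * y) t / qpoch q q n
          * (cauchyP q k u v * (x * t) ^ (k - n) / qpoch q q (k - n)))"
  unfolding rsh_shifted_gf_def sum_distrib_left
proof (rule sum.cong)
  fix n assume "n \<in> {..k}"
  then have "n \<le> k" by simp
  then have "t ^ k = t ^ n * t ^ (k - n)"
    by (simp add: power_add[symmetric])
  with \<open>n \<le> k\<close> show "cauchyP q k u v * t ^ k / qpoch q q k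
        * (gauss_coeff q k n * qpoch y q n * x ^ (k - n) * rsh_gf q (q ^ n * x) (q ^ n * y) t)
      = qpoch y q n * t ^ n * rsh_gf q (q ^ n * x) (q ^ n * y) t / qpoch q q n
        * (cauchyP q k u v * (x * t) ^ (k - n) / qpoch q q (k - n))"
    using qpoch_q_nonzero[of k] qpoch_q_nonzero[of n] qpoch_q_nonzero[of "k - n"]
    by (simp add: gauss_coeff_eq_qbinom qbinom_def field_simps power_mult_distrib)
qed simp

lemma row_sum_eq_3phi2_term:
  assumes "norm t < 1" "norm (x * t) < 1" "norm (u * x * t) < 1" "u \<noteq> 0"
    and "\<And>n. qpoch (y * t) q n \<noteq> 0" "\<And>n. qpoch (v * x * t) q n \<noteq> 0"
  shows "qpoch y q n * t ^ n * rsh_gf q (q ^ n * x) (q ^ n * y) t / qpoch q q n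
           * (cauchyP q n u v * qpoch_inf (q ^ n * v * (x * t)) q / qpoch_inf (u * (x * t)) q)
         = qpoch_inf (y * t) q * qpoch_inf (v * x * t) q /
             (qpoch_inf t q * qpoch_inf (x * t) q * qpoch_inf (u * x * t) q)
           * ((\<Prod>a\<leftarrow>[y, x * t, v / u]. qpoch a q n) /
               (qpoch q q n * (\<Prod>b\<leftarrow>[y * t, v * x * t]. qpoch b q n)) * (u * t) ^ n)"
proof -
  have split_yt: "qpoch_inf (y * t) q = qpoch (y * t) q n * qpoch_inf (q ^ n * y * t) q"
    using qpoch_inf_split[of n "y * t"] qpoch_factor_nonzero_if_qpoch_nonzero[OF assms(5)]
    by (simp add: mult.assoc)
  have split_vxt: "qpoch_inf (v * x * t) q = qpoch (v * x * t) q n * qpoch_inf (q ^ n * v * (x * t)) q"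
    using qpoch_inf_split[of n "v * x * t"] qpoch_factor_nonzero_if_qpoch_nonzero[OF assms(6)]
    by (simp add: mult.assoc)
  have split_xt: "qpoch_inf (x * t) q = qpoch (x * t) q n * qpoch_inf (q ^ n * x * t) q"
    using qpoch_inf_split[of n "x * t"] qpoch_factor_nonzero[OF assms(2)]
    by (simp add: mult.assoc)
  have nonzero: "qpoch (x * t) q n \<noteq> 0" "qpoch q q n \<noteq> 0" "qpoch_inf t q \<noteq> 0"
      "qpoch_inf (x * t) q \<noteq> 0" "qpoch_inf (u * x * t) q \<noteq> 0"
    using assms(1-3) qpoch_nonzero qpoch_q_nonzero qpoch_inf_nonzero_if_norm_less_1 by auto
  with split_xt have "qpoch_inf (q ^ n * x * t) q \<noteq> 0"
    by auto
  with nonzero assms(4-6) show ?thesis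
    unfolding rsh_gf_def split_yt split_vxt split_xt cauchyP_eq_qpoch[OF assms(4)]
    by (simp add: field_simps power_mult_distrib)
qed

lemma shifted_gf_array_bounded:
  assumes "norm (x * t) < 1"
  shows "\<exists>M \<ge> 0. \<forall>n j.
     norm (qpoch y q n * t ^ n * rsh_gf q (q ^ n * x) (q ^ n * y) t / qpoch q q n
           * (cauchyP q (n + j) u v * (x * t) ^ j / qpoch q q j))
       \<le> M * (max 1 (norm u) * norm t) ^ n * (max 1 (norm u) * norm (x * t)) ^ j"
proof -
  obtain K where K: "\<And>n. 1 / norm (qpoch q q n) \<le> K"
    using inverse_norm_qpoch_q_bounded by blast
  obtain C where C: "\<And>n. norm (rsh_gf q (q ^ n * x) (q ^ n * y) t) \<le> C"
    using norm_rsh_gf_qpower_bounded[OF assms] by blast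
  have "0 \<le> K" "0 \<le> C"
    using K[of 0] C[of 0] by (auto intro: order_trans[OF norm_ge_zero])
  define Ey where "Ey = exp (norm y / (1 - norm q))"
  define Ev where "Ev = exp (norm v / (1 - norm q))"
  have "norm (qpoch y q n * t ^ n * rsh_gf q (q ^ n * x) (q ^ n * y) t / qpoch q q n
           * (cauchyP q (n + j) u v * (x * t) ^ j / qpoch q q j))
      \<le> (Ey * C * K * Ev * K) * (max 1 (norm u) * norm t) ^ n * (max 1 (norm u) * norm (x * t)) ^ j"
    for n j
  proof -
    have "norm (qpoch y q n * t ^ n * rsh_gf q (q ^ n * x) (q ^ n * y) t / qpoch q q n
           * (cauchyP q (n + j) u v * (x * t) ^ j / qpoch q q j))
        = norm (qpoch y q n) * norm t ^ n * norm (rsh_gf q (q ^ n * x) (q ^ n * y) t)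
          * (1 / norm (qpoch q q n)) * (norm (cauchyP q (n + j) u v) * norm (x * t) ^ j * (1 / norm (qpoch q q j)))"
      by (simp add: norm_mult norm_divide norm_power)
    also have "\<dots> \<le> Ey * norm t ^ n * C * K * ((max 1 (norm u) ^ (n + j) * Ev) * norm (x * t) ^ j * K)"
      using \<open>0 \<le> K\<close> \<open>0 \<le> C\<close> norm_qpoch_le[of y n] norm_cauchyP_le[of "n + j" u v]
      by (intro mult_mono K C) (auto simp: Ey_def Ev_def)
    also have "\<dots> = (Ey * C * K * Ev * K) * (max 1 (norm u) * norm t) ^ n
        * (max 1 (norm u) * norm (x * t)) ^ j"
      by (simp add: power_mult_distrib power_add mult_ac)
    finally show ?thesis .
  qed
  moreover have "0 \<le> Ey * C * K * Ev * K"
    using \<open>0 \<le> K\<close> \<open>0 \<le> C\<close> by (simp add: Ey_def Ev_def)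
  ultimately show ?thesis by blast
qed

lemma rsh_shifted_gf_series_eq_row_series:
  fixes x y u v t :: complex
  assumes "norm t < 1" "norm (x * t) < 1" "norm (u * t) < 1" "norm (u * x * t) < 1"
  defines "row_value \<equiv> \<lambda>n. qpoch y q n * t ^ n * rsh_gf q (q ^ n * x) (q ^ n * y) t / qpoch q q n
      * (cauchyP q n u v * qpoch_inf (q ^ n * v * (x * t)) q / qpoch_inf (u * (x * t)) q)"
  shows "summable row_value"
    and "(\<lambda>k. cauchyP q k u v * t ^ k / qpoch q q k * rsh_shifted_gf q x y t k) sums (\<Sum>n. row_value n)"
proof -
  define coeff where "coeff n = qpoch y q n * t ^ n * rsh_gf q (q ^ n * x) (q ^ n * y) t / qpoch q q n"
    for n
  define b where "b n j = coeff n * (cauchyP q (n + j) u v * (x * t) ^ j / qpoch q q j)" for n j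
  define r3 where "r3 = max 1 (norm u) * norm t"
  define r4 where "r4 = max 1 (norm u) * norm (x * t)"
  obtain M where "M \<ge> 0" and bound: "\<And>n j. norm (b n j) \<le> (M * r3 ^ n) * r4 ^ j"
    using shifted_gf_array_bounded[OF assms(2), of y u v]
    unfolding b_def coeff_def r3_def r4_def by blast
  have "0 \<le> r3" "r3 < 1"
    using mult_max_1_less_1[of "norm u" 0 "norm t"] assms by (auto simp: r3_def norm_mult mult_ac)
  have "0 \<le> r4" "r4 < 1"
    using mult_max_1_less_1[of "norm u" 0 "norm (x * t)"] assms by (auto simp: r4_def norm_mult mult_ac)
  have rows: "(\<lambda>j. b n j) sums row_value n" for n
    unfolding b_def row_value_def coeff_def using assms(4)
    by (intro sums_mult cauchyP_shifted_series_sums) (simp add: mult.assoc)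
  have "summable row_value" and diagonals: "(\<lambda>k. \<Sum>n\<le>k. b n (k - n)) sums (\<Sum>n. row_value n)"
    using dominated_double_series_rows_antidiagonals[OF bound _ _ _ _ rows]
      \<open>0 \<le> M\<close> \<open>0 \<le> r3\<close> \<open>r3 < 1\<close> \<open>0 \<le> r4\<close> \<open>r4 < 1\<close>
    by (auto intro: summable_mult summable_geometric)
  moreover have "(\<Sum>n\<le>k. b n (k - n)) = cauchyP q k u v * t ^ k / qpoch q q k * rsh_shifted_gf q x y t k" for k
    unfolding cauchyP_mult_rsh_shifted_gf_eq_sum b_def coeff_def by (rule sum.cong) simp_all
  ultimately show "summable row_value"
    and "(\<lambda>k. cauchyP q k u v * t ^ k / qpoch q q k * rsh_shifted_gf q x y t k) sums (\<Sum>n. row_value n)"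
    by simp_all
qed

lemma rsh_shifted_gf_series_sums:
  assumes "norm t < 1" "norm (x * t) < 1" "norm (u * t) < 1" "norm (u * x * t) < 1" "u \<noteq> 0"
    and "\<And>n. qpoch (y * t) q n \<noteq> 0" "\<And>n. qpoch (v * x * t) q n \<noteq> 0"
  shows "(\<lambda>k. cauchyP q k u v * t ^ k / qpoch q q k * rsh_shifted_gf q x y t k) sums
           (qpoch_inf (y * t) q * qpoch_inf (v * x * t) q /
              (qpoch_inf t q * qpoch_inf (x * t) q * qpoch_inf (u * x * t) q) *
            bhs [y, x * t, v / u] [y * t, v * x * t] q (u * t))"
    (is "_ sums (?c * _)")
proof -
  define summand where "summand n = (\<Prod>a\<leftarrow>[y, x * t, v / u]. qpoch a q n) /
      (qpoch q q n * (\<Prod>b\<leftarrow>[y * t, v * x * t]. qpoch b q n)) * (u * t) ^ n" for n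
  have rows: "summable (\<lambda>n. ?c * summand n)"
    "(\<lambda>k. cauchyP q k u v * t ^ k / qpoch q q k * rsh_shifted_gf q x y t k) sums (\<Sum>n. ?c * summand n)"
    using rsh_shifted_gf_series_eq_row_series[where y = y and v = v, OF assms(1-4)]
      row_sum_eq_3phi2_term[OF assms(1,2,4-7)]
    by (simp_all add: summand_def)
  have "?c \<noteq> 0"
    using assms qpoch_factor_nonzero_if_qpoch_nonzero qpoch_inf_nonzero
      qpoch_inf_nonzero_if_norm_less_1 by simp
  with rows(1) have "summable summand"
    by (rule summable_mult_D)
  then have "(\<Sum>n. ?c * summand n) = ?c * (\<Sum>n. summand n)"
    by (rule suminf_mult)
  also have "(\<Sum>n. summand n) = bhs [y, x * t, v / u] [y * t, v * x * t] q (u * t)"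
    by (simp only: bhs_def summand_def)
  finally show ?thesis
    using rows(2) by simp
qed

end

theorem theorem2p1:
  fixes q x y u v t :: complex
  assumes "0 < norm q" "norm q < 1"
    and "norm t < 1" "norm (x * t) < 1" "norm (u * t) < 1" "norm (u * x * t) < 1"
    and "u \<noteq> 0"
    and "\<And>n. qpoch (y * t) q n \<noteq> 0" "\<And>n. qpoch (v * x * t) q n \<noteq> 0"
  shows "(\<lambda>n. rsh q n x y * rsh q n u v * t ^ n / qpoch q q n) sums
           (qpoch_inf (y * t) q * qpoch_inf (v * x * t) q /
              (qpoch_inf t q * qpoch_inf (x * t) q * qpoch_inf (u * x * t) q) *
            bhs [y, x * t, v / u] [y * t, v * x * t] q (u * t))"
proof -
  from rsh_shifted_gf_series_sums[OF assms(2-9)] rsh_product_series_sums[OF assms(2-6)]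
  show ?thesis
    by (simp add: sums_iff)
qed

end
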